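(* Let $c\in[0,1]$. For every countable collection of languages $\mathcal{L}$, there is a set-based generator that generates in the limit from $\mathcal{L}$ and achieves set-based upper density at least $1-c$ under enumerations without noise and with $c$-omissions.
   Context: The universe is $U=\mathbb{N}$ with its natural order. A language is an infinite subset of $U$; a collection is a countable family of languages. For $A,B\subseteq\mathbb{N}$ with $B=\{b_1<b_2<\cdots\}$, $\mu_{\rm low}(A,B)=\liminf_n\frac1n|A\cap\{b_1,\dots,b_n\}|$. An enumeration of $K$ without noise and with $c$-omissions is a sequence listing each element of some $\hat K\subseteq K$ exactly once and nothing else, where $\mu_{\rm low}(\hat K,K)\ge1-c$; $S_n=\{x_1,\dots,x_n\}$. A set-based generator outputs at step $n$, from $x_1,\dots,x_n$ and knowledge of $\mathcal{L}$ (not $K$), a set $A_n\subseteq U\setminus S_n$. It generates in the limit if for every $K\in\mathcal{L}$ and admissible enumeration there is $n^\star$ with $A_n\subseteq K$ for all $n\ge n^\star$; it achieves set-based upper density $\rho$ if $\limsup_n\mu_{\rm low}(A_n,K)\ge\rho$. *)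

theory Defs
  imports Complex_Main "HOL-Library.Countable_Set" "HOL-Library.Extended_Real" "HOL-Library.Liminf_Limsup"
begin

text \<open>Lower density of A relative to B = {b_1 < b_2 < ...}; enumerate B is 0-indexed,
  so enumerate B ` {..<n} = {b_1,...,b_n}.\<close>
definition mu_low :: "nat set \<Rightarrow> nat set \<Rightarrow> ereal" where
  "mu_low A B = liminf (\<lambda>n. ereal (real (card (A \<inter> enumerate B ` {..<n})) / real n))"

definition is_collection :: "nat set set \<Rightarrow> bool" where
  "is_collection L \<longleftrightarrow> countable L \<and> (\<forall>K\<in>L. infinite K)"

text \<open>x 0, x 1, ... stands for x_1, x_2, ...: an enumeration of K without noise and with
  c-omissions lists each element of Khat = range x exactly once, Khat \<subseteq> K, and
  mu_low Khat K \<ge> 1 - c.\<close>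
definition omission_enum :: "real \<Rightarrow> nat set \<Rightarrow> (nat \<Rightarrow> nat) \<Rightarrow> bool" where
  "omission_enum c K x \<longleftrightarrow> inj x \<and> range x \<subseteq> K \<and> mu_low (range x) K \<ge> ereal (1 - c)"

definition prefix :: "(nat \<Rightarrow> nat) \<Rightarrow> nat \<Rightarrow> nat list" where
  "prefix x n = map x [0..<n]"

definition set_based_generator :: "(nat list \<Rightarrow> nat set) \<Rightarrow> bool" where
  "set_based_generator G \<longleftrightarrow> (\<forall>xs. G xs \<inter> set xs = {})"

end

theory Submission
  imports Defs "HOL-Analysis.Extended_Real_Limits"
begin

text \<open>
  Enumerate the collection as \<open>L\<^sub>0, L\<^sub>1, \<dots>\<close>. After seeing \<open>x\<^sub>1, \<dots>, x\<^sub>n\<close>, let \<open>m\<close> be the least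
  index of a language that is consistent with \<open>x\<^sub>1, \<dots>, x\<^sub>n\<^sub>-\<^sub>1\<close> but not with \<open>x\<^sub>n\<close> (or \<open>m = n\<close> if no
  language is eliminated at this step), and output the intersection of the consistent
  languages of index below \<open>m\<close>, minus the elements already seen.

  If the target is \<open>K = L\<^sub>z\<close>, each of \<open>L\<^sub>0, \<dots>, L\<^sub>z\<close> is eliminated at most once, so eventually
  \<open>m > z\<close> and the output lies inside \<open>K\<close>. Conversely, infinitely often every consistent
  language of index below \<open>m\<close> contains all of \<open>x\<close>: otherwise, from some step \<open>N\<close> on, take the
  least index \<open>j\<close> of a language consistent at step \<open>N\<close> that misses some \<open>x\<^sub>k\<close>; at the step
  where \<open>L\<^sub>j\<close> is eliminated we get \<open>m \<le> j\<close>, so a smaller such index exists, a contradiction.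
  At those steps the output contains all elements not yet enumerated, a cofinite part of
  \<open>range x\<close>, whose lower density in \<open>K\<close> is at least \<open>1 - c\<close>.
\<close>

lemma frequently_le_Limsup:
  fixes f :: "'a \<Rightarrow> 'b::complete_linorder"
  assumes "\<exists>\<^sub>F x in F. a \<le> f x"
  shows "a \<le> Limsup F f"
  unfolding Limsup_def
proof (rule INF_greatest, safe)
  fix P assume "eventually P F"
  then obtain x where "P x" "a \<le> f x"
    using frequently_ex[OF frequently_eventually_conj[OF assms]] by blast
  then show "a \<le> Sup (f ` Collect P)"
    by (intro SUP_upper2[of x]) auto
qed

lemma mu_low_mono:
  assumes "A \<subseteq> A'"
  shows "mu_low A K \<le> mu_low A' K"
  unfolding mu_low_def
proof (intro Liminf_mono always_eventually allI)
  fix n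
  have "card (A \<inter> enumerate K ` {..<n}) \<le> card (A' \<inter> enumerate K ` {..<n})"
    by (rule card_mono) (use assms in auto)
  then show "ereal (real (card (A \<inter> enumerate K ` {..<n})) / real n)
     \<le> ereal (real (card (A' \<inter> enumerate K ` {..<n})) / real n)"
    by (simp add: divide_right_mono)
qed

lemma mu_low_Diff_finite:
  assumes "finite F"
  shows "mu_low A K \<le> mu_low (A - F) K"
proof -
  let ?B = "\<lambda>n. enumerate K ` {..<n}"
  define u where "u n = ereal (real (card F) / real n)" for n :: nat
  have count_le: "ereal (real (card (A \<inter> ?B n)) / real n)
      \<le> u n + ereal (real (card ((A - F) \<inter> ?B n)) / real n)" for n
  proof -
    have "card (A \<inter> ?B n) \<le> card (((A - F) \<inter> ?B n) \<union> F)"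
      by (intro card_mono) (use assms in auto)
    also have "\<dots> \<le> card ((A - F) \<inter> ?B n) + card F"
      by (rule card_Un_le)
    finally show ?thesis
      unfolding u_def by (simp add: divide_right_mono flip: add_divide_distrib)
  qed
  have "u \<longlonglongrightarrow> 0"
    unfolding u_def zero_ereal_def by (intro tendsto_ereal lim_const_over_n)
  have "mu_low A K \<le> liminf (\<lambda>n. u n + ereal (real (card ((A - F) \<inter> ?B n)) / real n))"
    unfolding mu_low_def by (intro Liminf_mono always_eventually allI count_le)
  also have "\<dots> = 0 + mu_low (A - F) K"
    unfolding mu_low_def by (rule ereal_liminf_lim_add[OF \<open>u \<longlonglongrightarrow> 0\<close>]) simp
  finally show ?thesis
    by simp
qed

lemma mu_low_mono_cofinite:
  assumes "finite F" and "B - F \<subseteq> A"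
  shows "mu_low B K \<le> mu_low A K"
  using mu_low_Diff_finite[OF assms(1), of B K] mu_low_mono[OF assms(2), of K] by order

lemma set_prefix: "set (prefix x n) = x ` {..<n}"
  unfolding prefix_def by auto

lemma length_prefix: "length (prefix x n) = n"
  unfolding prefix_def by simp

definition eliminated :: "(nat \<Rightarrow> nat set) \<Rightarrow> nat list \<Rightarrow> nat \<Rightarrow> bool" where
  "eliminated Ls xs i \<longleftrightarrow> set (butlast xs) \<subseteq> Ls i \<and> \<not> set xs \<subseteq> Ls i"

definition elimination_cutoff :: "(nat \<Rightarrow> nat set) \<Rightarrow> nat list \<Rightarrow> nat" where
  "elimination_cutoff Ls xs =
     (if \<exists>i. eliminated Ls xs i then LEAST i. eliminated Ls xs i else length xs)"

definition cutoff_generator :: "(nat \<Rightarrow> nat set) \<Rightarrow> nat list \<Rightarrow> nat set" where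
  "cutoff_generator Ls xs =
     \<Inter>{Ls i | i. i < elimination_cutoff Ls xs \<and> set xs \<subseteq> Ls i} - set xs"

lemma set_based_generator_cutoff_generator: "set_based_generator (cutoff_generator Ls)"
  unfolding set_based_generator_def cutoff_generator_def by auto

lemma eliminated_prefix:
  "eliminated Ls (prefix x n) i \<longleftrightarrow> x ` {..<n - 1} \<subseteq> Ls i \<and> \<not> x ` {..<n} \<subseteq> Ls i"
proof -
  have "butlast (prefix x n) = prefix x (n - 1)"
    unfolding prefix_def by (cases n) (simp_all add: map_butlast)
  then show ?thesis
    unfolding eliminated_def by (simp add: set_prefix)
qed

lemma elimination_cutoff_le: "eliminated Ls xs i \<Longrightarrow> elimination_cutoff Ls xs \<le> i"
  unfolding elimination_cutoff_def by (auto intro: Least_le)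

lemma eventually_not_eliminated:
  "\<forall>\<^sub>F n in sequentially. \<not> eliminated Ls (prefix x n) i"
proof (cases "range x \<subseteq> Ls i")
  case True
  then show ?thesis
    by (intro always_eventually) (auto simp: eliminated_prefix)
next
  case False
  then obtain k where "x k \<notin> Ls i" by blast
  have "\<not> eliminated Ls (prefix x n) i" if "n \<ge> k + 2" for n
  proof -
    have "x k \<in> x ` {..<n - 1}"
      using that by simp
    with \<open>x k \<notin> Ls i\<close> show ?thesis
      by (auto simp: eliminated_prefix)
  qed
  then show ?thesis
    unfolding eventually_sequentially by blast
qed

lemma eventually_elimination_cutoff_gt:
  "\<forall>\<^sub>F n in sequentially. z < elimination_cutoff Ls (prefix x n)"
proof -
  have "\<forall>\<^sub>F n in sequentially. (\<forall>i\<in>{..z}. \<not> eliminated Ls (prefix x n) i) \<and> z < n"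
    by (intro eventually_conj eventually_ball_finite eventually_gt_at_top)
       (auto intro: eventually_not_eliminated)
  then show ?thesis
  proof (rule eventually_mono)
    fix n assume n: "(\<forall>i\<in>{..z}. \<not> eliminated Ls (prefix x n) i) \<and> z < n"
    show "z < elimination_cutoff Ls (prefix x n)"
    proof (cases "\<exists>i. eliminated Ls (prefix x n) i")
      case True
      then have "eliminated Ls (prefix x n) (LEAST i. eliminated Ls (prefix x n) i)"
        by (rule LeastI_ex)
      with n True show ?thesis
        unfolding elimination_cutoff_def by (auto simp: not_le)
    next
      case False
      then have "elimination_cutoff Ls (prefix x n) = n"
        unfolding elimination_cutoff_def by (simp only: if_not_P if_False length_prefix)
      with n show ?thesis
        by simp
    qed
  qed
qed

lemma eventually_cutoff_generator_subset:
  assumes "range x \<subseteq> Ls z"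
  shows "\<forall>\<^sub>F n in sequentially. cutoff_generator Ls (prefix x n) \<subseteq> Ls z"
  using eventually_elimination_cutoff_gt
proof (rule eventually_mono)
  fix n assume "z < elimination_cutoff Ls (prefix x n)"
  with assms show "cutoff_generator Ls (prefix x n) \<subseteq> Ls z"
    unfolding cutoff_generator_def set_prefix by blast
qed

lemma ex_eliminated_after:
  assumes "x ` {..<N} \<subseteq> Ls j" and "\<not> range x \<subseteq> Ls j"
  shows "\<exists>n\<ge>N. eliminated Ls (prefix x n) j"
proof -
  define n where "n = (LEAST n. \<not> x ` {..<n} \<subseteq> Ls j)"
  from assms(2) obtain k where "x k \<notin> Ls j" by blast
  then have "\<not> x ` {..<Suc k} \<subseteq> Ls j" by auto
  then have inconsistent: "\<not> x ` {..<n} \<subseteq> Ls j"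
    unfolding n_def by (rule LeastI)
  then have "N < n"
    using assms(1) by (meson image_mono lessThan_subset_iff not_le order_trans)
  moreover have "x ` {..<n - 1} \<subseteq> Ls j"
    using not_less_Least[of "n - 1" "\<lambda>n. \<not> x ` {..<n} \<subseteq> Ls j"] \<open>N < n\<close>
    unfolding n_def[symmetric] by simp
  ultimately show ?thesis
    using inconsistent by (intro exI[of _ n]) (simp add: eliminated_prefix)
qed

lemma frequently_cutoff_generator_superset:
  "\<exists>\<^sub>F n in sequentially. range x - x ` {..<n} \<subseteq> cutoff_generator Ls (prefix x n)"
proof -
  let ?m = "\<lambda>n. elimination_cutoff Ls (prefix x n)"
  define offending where
    "offending n i \<longleftrightarrow> x ` {..<n} \<subseteq> Ls i \<and> \<not> range x \<subseteq> Ls i" for n i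
  have "\<exists>\<^sub>F n in sequentially. \<forall>i < ?m n. \<not> offending n i"
  proof (rule ccontr)
    assume "\<not> ?thesis"
    then obtain N where bad: "\<And>n. n \<ge> N \<Longrightarrow> \<exists>i < ?m n. offending n i"
      unfolding not_frequently eventually_sequentially by auto
    define j where "j = (LEAST i. offending N i)"
    have "offending N j"
      unfolding j_def by (rule LeastI_ex) (use bad[of N] in blast)
    then obtain n where "n \<ge> N" and "eliminated Ls (prefix x n) j"
      using ex_eliminated_after[of x N Ls j] unfolding offending_def by blast
    then have "?m n \<le> j"
      by (simp add: elimination_cutoff_le)
    obtain i where "i < ?m n" and "offending n i"
      using bad[OF \<open>n \<ge> N\<close>] by blast
    have "x ` {..<N} \<subseteq> x ` {..<n}"
      using \<open>n \<ge> N\<close> by (intro image_mono) auto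
    with \<open>offending n i\<close> have "offending N i"
      unfolding offending_def by blast
    moreover have "i < j"
      using \<open>i < ?m n\<close> \<open>?m n \<le> j\<close> by linarith
    ultimately show False
      using not_less_Least[of i "offending N"] unfolding j_def by blast
  qed
  then show ?thesis
  proof (rule frequently_elim1)
    fix n assume clean: "\<forall>i < ?m n. \<not> offending n i"
    have "range x \<subseteq> Ls i" if "i < ?m n" and "x ` {..<n} \<subseteq> Ls i" for i
      using clean that unfolding offending_def by blast
    then show "range x - x ` {..<n} \<subseteq> cutoff_generator Ls (prefix x n)"
      unfolding cutoff_generator_def set_prefix by blast
  qed
qed

theorem proposition6p3:
  fixes c :: real and L :: "nat set set"
  assumes "0 \<le> c" and "c \<le> 1" and "is_collection L"
  shows "\<exists>G. set_based_generator G \<and>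
           (\<forall>K\<in>L. \<forall>x. omission_enum c K x \<longrightarrow>
              (\<exists>n0. \<forall>n\<ge>n0. G (prefix x n) \<subseteq> K) \<and>
              limsup (\<lambda>n. mu_low (G (prefix x n)) K) \<ge> ereal (1 - c))"
proof -
  define Ls where "Ls = from_nat_into L"
  let ?G = "cutoff_generator Ls"
  have "(\<exists>n0. \<forall>n\<ge>n0. ?G (prefix x n) \<subseteq> K) \<and>
        ereal (1 - c) \<le> limsup (\<lambda>n. mu_low (?G (prefix x n)) K)"
    if "K \<in> L" and "omission_enum c K x" for K x
  proof
    from that(2) have "range x \<subseteq> K" and dense: "ereal (1 - c) \<le> mu_low (range x) K"
      unfolding omission_enum_def by auto
    obtain z where "Ls z = K"
      using from_nat_into_surj \<open>K \<in> L\<close> assms(3) unfolding Ls_def is_collection_def by metis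
    show "\<exists>n0. \<forall>n\<ge>n0. ?G (prefix x n) \<subseteq> K"
      using eventually_cutoff_generator_subset[of x Ls z] \<open>range x \<subseteq> K\<close> \<open>Ls z = K\<close>
      unfolding eventually_sequentially by simp
    have "\<exists>\<^sub>F n in sequentially. mu_low (range x) K \<le> mu_low (?G (prefix x n)) K"
      using frequently_cutoff_generator_superset
      by (rule frequently_elim1) (rule mu_low_mono_cofinite[OF finite_imageI[OF finite_lessThan]])
    then have "mu_low (range x) K \<le> limsup (\<lambda>n. mu_low (?G (prefix x n)) K)"
      by (rule frequently_le_Limsup)
    with dense show "ereal (1 - c) \<le> limsup (\<lambda>n. mu_low (?G (prefix x n)) K)"
      by order
  qed
  then show ?thesis
    using set_based_generator_cutoff_generator by blast
qed

end
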